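(* Let $A$ be a real $n\times n$ matrix and let $\mathcal{A} = \begin{pmatrix} 0 & A \\ A^T & 0 \end{pmatrix}$ (a real symmetric $2n\times 2n$ matrix). Then $$e^{\mathcal{A}} = \begin{pmatrix} \cosh\left(\sqrt{AA^T}\right) & A\left(\sqrt{A^TA}\right)^{\dagger}\sinh\left(\sqrt{A^TA}\right) \\ \sinh\left(\sqrt{A^TA}\right)\left(\sqrt{A^TA}\right)^{\dagger}A^T & \cosh\left(\sqrt{A^TA}\right) \end{pmatrix}.$$
   Context: For a symmetric positive semidefinite matrix $M$, $\sqrt{M}$ denotes its unique symmetric positive semidefinite square root, and $\cosh$, $\sinh$ of a symmetric matrix are defined by the usual power series (equivalently via its eigendecomposition). $B^{\dagger}$ denotes the Moore–Penrose generalized inverse of $B$. In the paper $A$ is the adjacency matrix of a directed graph, but the identity is stated for this block matrix built from $A$. *)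

theory Defs
  imports "HOL-Analysis.Analysis"
begin

primrec matpow :: "real^'n^'n \<Rightarrow> nat \<Rightarrow> real^'n^'n" where
  "matpow M 0 = mat 1"
| "matpow M (Suc k) = M ** matpow M k"

definition mat_exp :: "real^'n^'n \<Rightarrow> real^'n^'n" where
  "mat_exp M = (\<Sum>k. (1 / fact k) *\<^sub>R matpow M k)"

definition mat_cosh :: "real^'n^'n \<Rightarrow> real^'n^'n" where
  "mat_cosh M = (\<Sum>k. (1 / fact (2*k)) *\<^sub>R matpow M (2*k))"

definition mat_sinh :: "real^'n^'n \<Rightarrow> real^'n^'n" where
  "mat_sinh M = (\<Sum>k. (1 / fact (2*k+1)) *\<^sub>R matpow M (2*k+1))"

definition symmetric_psd :: "real^'n^'n \<Rightarrow> bool" where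
  "symmetric_psd M \<longleftrightarrow> transpose M = M \<and> (\<forall>x. 0 \<le> x \<bullet> (M *v x))"

definition mat_sqrt :: "real^'n^'n \<Rightarrow> real^'n^'n" where
  "mat_sqrt M = (THE S. symmetric_psd S \<and> S ** S = M)"

definition pinv :: "real^'n^'m \<Rightarrow> real^'m^'n" where
  "pinv B = (THE X. B ** X ** B = B \<and> X ** B ** X = X \<and>
                    transpose (B ** X) = B ** X \<and> transpose (X ** B) = X ** B)"

text \<open>2x2 block matrix, rows/columns indexed by 'n + 'n (first block Inl, second Inr).\<close>
definition block2 :: "real^'n^'n \<Rightarrow> real^'n^'n \<Rightarrow> real^'n^'n \<Rightarrow> real^'n^'n
                      \<Rightarrow> real^('n + 'n)^('n + 'n)" where
  "block2 P Q R S = (\<chi> i j. case i of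
       Inl a \<Rightarrow> (case j of Inl b \<Rightarrow> P $ a $ b | Inr b \<Rightarrow> Q $ a $ b)
     | Inr a \<Rightarrow> (case j of Inl b \<Rightarrow> R $ a $ b | Inr b \<Rightarrow> S $ a $ b))"

end

theory Submission
  imports Defs
begin

text \<open>The square of \<open>\<A> = [0 A; A\<^sup>T 0]\<close> is block diagonal, \<open>\<A>\<^sup>2 = diag (A A\<^sup>T) (A\<^sup>T A)\<close>, so
  \<open>e\<^sup>\<A> = cosh \<A> + sinh \<A>\<close> splits into power series in \<open>A A\<^sup>T\<close> and \<open>A\<^sup>T A\<close>: with
  \<open>C X = \<Sum>k. X\<^sup>k / (2k)!\<close> and \<open>D X = \<Sum>k. X\<^sup>k / (2k+1)!\<close> one gets
  \<open>e\<^sup>\<A> = [C (A A\<^sup>T)  A D (A\<^sup>T A); D (A\<^sup>T A) A\<^sup>T  C (A\<^sup>T A)]\<close>.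
  For a symmetric square root \<open>R\<close> of \<open>X\<close> we have \<open>cosh R = C X\<close> and \<open>sinh R = R D X = D X R\<close>,
  and if \<open>R\<^sup>2 = A\<^sup>T A\<close> then \<open>A R\<^sup>\<dagger> R = A\<close>, because \<open>R (R\<^sup>\<dagger> R - 1) = 0\<close> forces
  \<open>A (R\<^sup>\<dagger> R - 1) = 0\<close>. Existence and uniqueness of positive semidefinite square roots and the
  Penrose equations for \<open>R\<^sup>\<dagger>\<close> come from the spectral theorem, obtained by maximising the
  Rayleigh quotient on invariant subspaces.\<close>

lemma bounded_bilinear_matrix_mult:
  "bounded_bilinear ((**) :: real^'n^'m \<Rightarrow> real^'k^'n \<Rightarrow> real^'k^'m)"
  unfolding bilinear_conv_bounded_bilinear[symmetric] bilinear_def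
  by (auto intro!: linearI simp: matrix_matrix_mult_def vec_eq_iff sum.distrib
      sum_distrib_left algebra_simps)

lemmas matrix_diff_ldistrib = bounded_bilinear.diff_right[OF bounded_bilinear_matrix_mult]
lemmas matrix_diff_rdistrib = bounded_bilinear.diff_left[OF bounded_bilinear_matrix_mult]
lemmas matrix_scaleR_left = bounded_bilinear.scaleR_left[OF bounded_bilinear_matrix_mult]
lemmas matrix_scaleR_right = bounded_bilinear.scaleR_right[OF bounded_bilinear_matrix_mult]
lemmas bounded_linear_matrix_mult_left =
  bounded_bilinear.bounded_linear_left[OF bounded_bilinear_matrix_mult]
lemmas bounded_linear_matrix_mult_right =
  bounded_bilinear.bounded_linear_right[OF bounded_bilinear_matrix_mult]

lemma transpose_diff: "transpose (A - B) = transpose A - transpose (B :: 'a::ab_group_add^'n^'m)"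
  by (simp add: transpose_def vec_eq_iff)

subsection \<open>Matrix power series\<close>

text \<open>With the coefficients \<open>1 / (2k)!\<close> and \<open>1 / (2k+1)!\<close> this is \<open>cosh \<surd>X\<close> and
  \<open>sinh \<surd>X / \<surd>X\<close>, without any square root being taken.\<close>
definition mat_series :: "(nat \<Rightarrow> real) \<Rightarrow> real^'n^'n \<Rightarrow> real^'n^'n" where
  "mat_series c X = (\<Sum>k. c k *\<^sub>R matpow X k)"

lemma norm_matpow_le:
  obtains K :: real where "K \<ge> 0"
    "\<And>(M::real^'n^'n) k. norm (matpow M k) \<le> norm (mat 1 :: real^'n^'n) * (K * norm M) ^ k"
proof -
  obtain K where K: "K \<ge> 0" "\<And>(a::real^'n^'n) (b::real^'n^'n). norm (a ** b) \<le> norm a * norm b * K"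
    using bounded_bilinear.nonneg_bounded[OF bounded_bilinear_matrix_mult] by blast
  have "norm (matpow M k) \<le> norm (mat 1 :: real^'n^'n) * (K * norm M) ^ k" for M :: "real^'n^'n" and k
  proof (induction k)
    case (Suc k)
    have "norm (matpow M (Suc k)) \<le> norm M * norm (matpow M k) * K"
      using K(2) by simp
    also have "\<dots> \<le> norm M * (norm (mat 1 :: real^'n^'n) * (K * norm M) ^ k) * K"
      using Suc K(1) by (simp add: mult_left_mono mult_right_mono)
    finally show ?case by (simp add: algebra_simps)
  qed simp
  with K(1) that show ?thesis by blast
qed

lemma summable_mat_series:
  assumes "\<And>k. \<bar>c k\<bar> \<le> 1 / fact k"
  shows "summable (\<lambda>k. c k *\<^sub>R matpow (X::real^'n^'n) k)"
proof -
  obtain K :: real where K: "K \<ge> 0"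
    "\<And>(M::real^'n^'n) k. norm (matpow M k) \<le> norm (mat 1 :: real^'n^'n) * (K * norm M) ^ k"
    using norm_matpow_le by blast
  let ?g = "\<lambda>k. norm (mat 1 :: real^'n^'n) * (inverse (fact k) * (K * norm X) ^ k)"
  have bound: "norm (c k *\<^sub>R matpow X k) \<le> ?g k" for k
  proof -
    have "norm (c k *\<^sub>R matpow X k) = \<bar>c k\<bar> * norm (matpow X k)" by simp
    also have "\<dots> \<le> (1 / fact k) * (norm (mat 1 :: real^'n^'n) * (K * norm X) ^ k)"
      by (intro mult_mono assms K(2)) simp_all
    finally show ?thesis by (simp add: divide_inverse mult_ac)
  qed
  have "summable ?g"
    by (intro summable_mult summable_exp)
  then show ?thesis
    by (rule summable_comparison_test[rotated]) (use bound in blast)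
qed

lemma abs_inverse_fact_double_le:
  "\<bar>1 / fact (2 * k) :: real\<bar> \<le> 1 / fact k"
  "\<bar>1 / fact (2 * k + 1) :: real\<bar> \<le> 1 / fact k"
proof -
  have "\<bar>1 / fact m :: real\<bar> \<le> 1 / fact k" if "k \<le> m" for m
    using that by (simp add: divide_simps fact_mono)
  from this[of "2 * k"] this[of "2 * k + 1"] show
    "\<bar>1 / fact (2 * k) :: real\<bar> \<le> 1 / fact k"
    "\<bar>1 / fact (2 * k + 1) :: real\<bar> \<le> 1 / fact k"
    by simp_all
qed

lemma matpow_intertwine:
  assumes "B ** Y = X ** B"
  shows "B ** matpow Y k = matpow X k ** B"
proof (induction k)
  case (Suc k)
  have "B ** matpow Y (Suc k) = X ** (B ** matpow Y k)"
    by (simp add: assms matrix_mul_assoc)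
  then show ?case by (simp add: Suc matrix_mul_assoc)
qed simp

lemma mat_series_intertwine:
  assumes "\<And>k. \<bar>c k\<bar> \<le> 1 / fact k" and "B ** Y = X ** B"
  shows "B ** mat_series c Y = mat_series c X ** B"
proof -
  have "B ** mat_series c Y = (\<Sum>k. c k *\<^sub>R (B ** matpow Y k))"
    unfolding mat_series_def
    by (simp add: bounded_linear.suminf[OF bounded_linear_matrix_mult_right
          summable_mat_series[OF assms(1)]] matrix_scaleR_right)
  also have "\<dots> = (\<Sum>k. c k *\<^sub>R matpow X k ** B)"
    by (simp add: matpow_intertwine[OF assms(2)] matrix_scaleR_left)
  also have "\<dots> = mat_series c X ** B"
    unfolding mat_series_def
    by (simp add: bounded_linear.suminf[OF bounded_linear_matrix_mult_left
          summable_mat_series[OF assms(1)]])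
  finally show ?thesis .
qed

lemma matpow_double: "matpow M (2 * k) = matpow (M ** M) k"
  by (induction k) (simp_all add: matrix_mul_assoc)

lemma matpow_double_Suc: "matpow M (2 * k + 1) = M ** matpow (M ** M) k"
  by (simp add: matpow_double)

lemma mat_cosh_eq_mat_series: "mat_cosh S = mat_series (\<lambda>k. 1 / fact (2 * k)) (S ** S)"
  unfolding mat_cosh_def mat_series_def matpow_double ..

lemma mat_sinh_eq_mat_series:
  "mat_sinh S = S ** mat_series (\<lambda>k. 1 / fact (2 * k + 1)) (S ** S)"
  "mat_sinh S = mat_series (\<lambda>k. 1 / fact (2 * k + 1)) (S ** S) ** S"
proof -
  show first: "mat_sinh S = S ** mat_series (\<lambda>k. 1 / fact (2 * k + 1)) (S ** S)"
    unfolding mat_sinh_def mat_series_def matpow_double_Suc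
    by (simp only: bounded_linear.suminf[OF bounded_linear_matrix_mult_right
          summable_mat_series[OF abs_inverse_fact_double_le(2)]] matrix_scaleR_right)
  show "mat_sinh S = mat_series (\<lambda>k. 1 / fact (2 * k + 1)) (S ** S) ** S"
    unfolding first
    by (rule mat_series_intertwine[OF abs_inverse_fact_double_le(2)]) (simp add: matrix_mul_assoc)
qed

lemma suminf_eq_even_plus_odd:
  fixes f :: "nat \<Rightarrow> 'a::real_normed_vector"
  assumes "summable f" "(\<lambda>k. f (2 * k)) sums s" "(\<lambda>k. f (2 * k + 1)) sums t"
  shows "suminf f = s + t"
proof -
  have "(\<lambda>n. sum f {n * 2 ..< n * 2 + 2}) sums suminf f"
    using sums_group[OF summable_sums[OF assms(1)], of 2] by simp
  moreover have "sum f {n * 2 ..< n * 2 + 2} = f (2 * n) + f (2 * n + 1)" for n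
    by (simp add: numeral_2_eq_2 mult.commute)
  ultimately have "(\<lambda>n. f (2 * n) + f (2 * n + 1)) sums suminf f" by simp
  with sums_add[OF assms(2,3)] show ?thesis by (blast intro: sums_unique2)
qed

lemma mat_exp_eq_cosh_plus_sinh: "mat_exp M = mat_cosh M + mat_sinh M"
  unfolding mat_exp_def
proof (rule suminf_eq_even_plus_odd)
  show "summable (\<lambda>k. (1 / fact k) *\<^sub>R matpow M k)"
    by (rule summable_mat_series) simp
  show "(\<lambda>k. (1 / fact (2 * k)) *\<^sub>R matpow M (2 * k)) sums mat_cosh M"
    unfolding mat_cosh_eq_mat_series mat_series_def matpow_double
    by (intro summable_sums summable_mat_series abs_inverse_fact_double_le)
  have "(\<lambda>k. M ** ((1 / fact (2 * k + 1)) *\<^sub>R matpow (M ** M) k)) sums mat_sinh M"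
    unfolding mat_sinh_eq_mat_series(1) mat_series_def
    by (intro bounded_linear.sums[OF bounded_linear_matrix_mult_right] summable_sums
        summable_mat_series abs_inverse_fact_double_le)
  then show "(\<lambda>k. (1 / fact (2 * k + 1)) *\<^sub>R matpow M (2 * k + 1)) sums mat_sinh M"
    by (simp only: matpow_double_Suc matrix_scaleR_right)
qed


subsection \<open>Block matrices\<close>

lemma block2_nth [simp]:
  "block2 P Q R S $ Inl a $ Inl b = P $ a $ b"
  "block2 P Q R S $ Inl a $ Inr b = Q $ a $ b"
  "block2 P Q R S $ Inr a $ Inl b = R $ a $ b"
  "block2 P Q R S $ Inr a $ Inr b = S $ a $ b"
  by (simp_all add: block2_def)

lemma block2_eqI:
  assumes "\<And>a b. M $ Inl a $ Inl b = P $ a $ b" "\<And>a b. M $ Inl a $ Inr b = Q $ a $ b"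
    "\<And>a b. M $ Inr a $ Inl b = R $ a $ b" "\<And>a b. M $ Inr a $ Inr b = S $ a $ b"
  shows "M = block2 P Q R S"
  using assms by (simp add: vec_eq_iff split_sum_all)

lemma sum_UNIV_Inl_Inr:
  "(\<Sum>x\<in>(UNIV::('a::finite + 'b::finite) set). f x) = (\<Sum>a\<in>UNIV. f (Inl a)) + (\<Sum>b\<in>UNIV. f (Inr b))"
  by (subst UNIV_Plus_UNIV[symmetric], subst sum.Plus) (simp_all add: comp_def)

lemma block2_mult:
  "block2 P Q R S ** block2 P' Q' R' S' =
   block2 (P ** P' + Q ** R') (P ** Q' + Q ** S') (R ** P' + S ** R') (R ** Q' + S ** S')"
  by (rule block2_eqI) (simp_all add: matrix_matrix_mult_def sum_UNIV_Inl_Inr)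

lemma block2_add: "block2 P Q R S + block2 P' Q' R' S' = block2 (P + P') (Q + Q') (R + R') (S + S')"
  by (rule block2_eqI) simp_all

lemma block2_scaleR: "c *\<^sub>R block2 P Q R S = block2 (c *\<^sub>R P) (c *\<^sub>R Q) (c *\<^sub>R R) (c *\<^sub>R S)"
  by (rule block2_eqI) simp_all

lemma block2_mat_1: "block2 (mat 1) 0 0 (mat 1) = mat 1"
  by (rule sym, rule block2_eqI) (simp_all add: mat_def)

lemma sums_matrixI:
  fixes f :: "nat \<Rightarrow> real^'n^'m"
  assumes "\<And>i j. (\<lambda>k. f k $ i $ j) sums (l $ i $ j)"
  shows "f sums l"
  unfolding sums_def
  by (intro vec_tendstoI) (use assms in \<open>simp add: sums_def sum_component\<close>)

lemma block2_sums:
  assumes "P sums p" "Q sums q" "R sums r" "S sums s"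
  shows "(\<lambda>k. block2 (P k) (Q k) (R k) (S k)) sums block2 p q r s"
proof (rule sums_matrixI)
  fix i j :: "'a + 'a"
  show "(\<lambda>k. block2 (P k) (Q k) (R k) (S k) $ i $ j) sums (block2 p q r s $ i $ j)"
    by (cases i; cases j) (simp_all add: assms[THEN sums_vec_nth, THEN sums_vec_nth])
qed

lemma matpow_block2_diag:
  "matpow (block2 P 0 0 Q) k = block2 (matpow P k) 0 0 (matpow Q k)"
  by (induction k) (simp_all add: block2_mat_1 block2_mult)

lemma mat_series_block2_diag:
  assumes "\<And>k. \<bar>c k\<bar> \<le> 1 / fact k"
  shows "mat_series c (block2 P 0 0 Q) = block2 (mat_series c P) 0 0 (mat_series c Q)"
  unfolding mat_series_def matpow_block2_diag block2_scaleR scaleR_zero_right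
  by (intro sums_unique[symmetric] block2_sums summable_sums summable_mat_series assms sums_zero)

lemma mat_exp_antidiag_block2:
  fixes A :: "real^'n^'n"
  defines "X \<equiv> A ** transpose A" and "Y \<equiv> transpose A ** A"
  shows "mat_exp (block2 0 A (transpose A) 0) =
    block2 (mat_series (\<lambda>k. 1 / fact (2 * k)) X)
           (A ** mat_series (\<lambda>k. 1 / fact (2 * k + 1)) Y)
           (mat_series (\<lambda>k. 1 / fact (2 * k + 1)) Y ** transpose A)
           (mat_series (\<lambda>k. 1 / fact (2 * k)) Y)"
proof -
  let ?M = "block2 0 A (transpose A) 0"
  let ?S = "mat_series (\<lambda>k. 1 / fact (2 * k + 1))"
  note even = abs_inverse_fact_double_le(1) and odd = abs_inverse_fact_double_le(2)
  have square: "?M ** ?M = block2 X 0 0 Y"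
    by (simp add: block2_mult X_def Y_def)
  have "transpose A ** ?S X = ?S Y ** transpose A"
    by (rule mat_series_intertwine[OF odd]) (simp add: X_def Y_def matrix_mul_assoc)
  then have "?M ** ?S (?M ** ?M) = block2 0 (A ** ?S Y) (?S Y ** transpose A) 0"
    unfolding square mat_series_block2_diag[OF odd] by (simp add: block2_mult)
  then show ?thesis
    unfolding mat_exp_eq_cosh_plus_sinh mat_cosh_eq_mat_series mat_sinh_eq_mat_series(1)
      square mat_series_block2_diag[OF even]
    by (simp add: block2_add)
qed

subsection \<open>The spectral theorem for symmetric matrices\<close>

lemma mat_matrix_vector_mult: "(mat c :: real^'n^'n) *v x = c *\<^sub>R x"
  by (simp add: vec_eq_iff matrix_vector_mult_def mat_def if_distrib if_distribR cong: if_cong)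

lemma inner_symmetric_matrix:
  fixes N :: "real^'n^'n"
  assumes "transpose N = N"
  shows "x \<bullet> (N *v y) = (N *v x) \<bullet> y"
  by (metis assms dot_lmul_matrix transpose_matrix_vector)

lemma linear_term_eq_0_if_quadratic_nonneg:
  fixes a b :: real
  assumes nonneg: "\<And>t. 0 \<le> 2 * t * a + t\<^sup>2 * b" and "0 \<le> b"
  shows "a = 0"
proof -
  define e where "e = 1 / (b + 1)"
  have e: "0 < e" "e * b - 2 < 0"
    using \<open>0 \<le> b\<close> by (auto simp: e_def field_simps)
  have "0 \<le> 2 * (- e * a) * a + (- e * a)\<^sup>2 * b"
    by (rule nonneg)
  also have "\<dots> = e * a\<^sup>2 * (e * b - 2)"
    by (simp add: power2_eq_square algebra_simps)
  finally have "e * a\<^sup>2 \<le> 0"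
    using e(2) by (simp add: zero_le_mult_iff)
  with e(1) show "a = 0"
    by (simp add: mult_le_0_iff)
qed

text \<open>Along the line \<open>v + t P v\<close> the form is a quadratic in \<open>t\<close> with vanishing constant
  term, so its linear coefficient \<open>2 (P v \<bullet> P v)\<close> must vanish.\<close>
lemma psd_on_subspace_quadratic_eq_0:
  fixes P :: "real^'n^'n"
  assumes W: "subspace W" and sym: "transpose P = P"
    and psd: "\<And>y. y \<in> W \<Longrightarrow> 0 \<le> y \<bullet> (P *v y)"
    and v: "v \<in> W" "P *v v \<in> W" and zero: "v \<bullet> (P *v v) = 0"
  shows "P *v v = 0"
proof -
  let ?w = "P *v v"
  have "0 \<le> 2 * t * (?w \<bullet> ?w) + t\<^sup>2 * (?w \<bullet> (P *v ?w))" for t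
  proof -
    have "v + t *\<^sub>R ?w \<in> W"
      using W v by (simp add: subspace_add subspace_scale)
    then have "0 \<le> (v + t *\<^sub>R ?w) \<bullet> (P *v (v + t *\<^sub>R ?w))"
      by (rule psd)
    also have "\<dots> = v \<bullet> ?w + t * (v \<bullet> (P *v ?w)) + t * (?w \<bullet> ?w) + t\<^sup>2 * (?w \<bullet> (P *v ?w))"
      by (simp add: algebra_simps inner_add_left inner_add_right power2_eq_square)
    also have "v \<bullet> (P *v ?w) = ?w \<bullet> ?w"
      by (rule inner_symmetric_matrix[OF sym])
    finally show ?thesis
      using zero by (simp add: algebra_simps)
  qed
  moreover have "0 \<le> ?w \<bullet> (P *v ?w)"
    using psd v(2) .
  ultimately have "?w \<bullet> ?w = 0"
    by (rule linear_term_eq_0_if_quadratic_nonneg)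
  then show ?thesis by simp
qed

text \<open>The maximiser of the Rayleigh quotient on the unit sphere of an invariant subspace
  is an eigenvector.\<close>
lemma symmetric_matrix_invariant_subspace_eigenvector:
  fixes N :: "real^'n^'n"
  assumes sym: "transpose N = N" and W: "subspace W" "W \<noteq> {0}"
    and invariant: "\<And>x. x \<in> W \<Longrightarrow> N *v x \<in> W"
  obtains v where "v \<in> W" "norm v = 1" "N *v v = (v \<bullet> (N *v v)) *\<^sub>R v"
proof -
  let ?K = "sphere 0 1 \<inter> W"
  let ?q = "\<lambda>x. x \<bullet> (N *v x)"
  obtain w where "w \<in> W" "w \<noteq> 0"
    using W subspace_0 by blast
  then have "(1 / norm w) *\<^sub>R w \<in> ?K"
    using W by (simp add: subspace_scale)
  moreover have "compact ?K"
    using W by (intro compact_Int_closed compact_sphere closed_subspace)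
  moreover have "continuous_on ?K ?q"
    by (intro continuous_intros)
  ultimately obtain v where v: "v \<in> ?K" and max: "\<And>y. y \<in> ?K \<Longrightarrow> ?q y \<le> ?q v"
    using continuous_attains_sup[of ?K ?q] by blast
  let ?P = "mat (?q v) - N"
  have P: "?P *v x = ?q v *\<^sub>R x - N *v x" for x
    by (simp add: matrix_vector_mult_diff_rdistrib mat_matrix_vector_mult)
  have "0 \<le> y \<bullet> (?P *v y)" if y: "y \<in> W" for y
  proof (cases "y = 0")
    case False
    then have "(1 / norm y) *\<^sub>R y \<in> ?K"
      using y W by (simp add: subspace_scale)
    then have "(1 / norm y)\<^sup>2 * ?q y \<le> ?q v"
      using max by (fastforce simp: matrix_vector_mult_scaleR power2_eq_square)
    with False have "?q y \<le> ?q v * (norm y)\<^sup>2"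
      by (simp add: field_simps)
    then show ?thesis
      by (simp add: P inner_diff_right power2_norm_eq_inner)
  qed simp
  moreover have "v \<in> W" "norm v = 1"
    using v by auto
  moreover from this have "v \<bullet> (?P *v v) = 0"
    by (simp add: P inner_diff_right power2_norm_eq_inner[symmetric])
  moreover have "?P *v v \<in> W"
    using W \<open>v \<in> W\<close> invariant by (simp add: P subspace_diff subspace_scale)
  moreover have "transpose ?P = ?P"
    using sym by (simp add: transpose_diff)
  ultimately have "?P *v v = 0"
    using psd_on_subspace_quadratic_eq_0[OF W(1)] by blast
  with \<open>v \<in> W\<close> \<open>norm v = 1\<close> that show ?thesis
    by (simp add: P)
qed

definition orthonormal_basis :: "(real^'n) set \<Rightarrow> bool" where
  "orthonormal_basis B \<longleftrightarrow>
    finite B \<and> card B = CARD('n) \<and> (\<forall>b\<in>B. norm b = 1) \<and> pairwise orthogonal B"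

lemma symmetric_matrix_orthonormal_eigenvectors:
  fixes N :: "real^'n^'n"
  assumes sym: "transpose N = N" and "k \<le> CARD('n)"
  obtains B where "finite B" "card B = k" "\<forall>b\<in>B. norm b = 1" "pairwise orthogonal B"
    "\<forall>b\<in>B. N *v b = (b \<bullet> (N *v b)) *\<^sub>R b"
  using \<open>k \<le> CARD('n)\<close>
proof (induction k arbitrary: thesis)
  case 0
  show ?case by (rule "0.prems"(1)[of "{}"]) simp_all
next
  case (Suc k)
  obtain B where B: "finite B" "card B = k" "\<forall>b\<in>B. norm b = 1" "pairwise orthogonal B"
    and eig: "\<forall>b\<in>B. N *v b = (b \<bullet> (N *v b)) *\<^sub>R b"
    using Suc.IH Suc.prems(2) by (metis Suc_leD)
  define W where "W = {x::real^'n. \<forall>b\<in>B. b \<bullet> x = 0}"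
  have W: "subspace W"
    by (auto simp: W_def subspace_def inner_add_right)
  have "dim B < DIM(real^'n)"
    using dim_le_card[OF span_superset B(1)] B(2) Suc.prems(2) by simp
  then obtain x :: "real^'n" where "x \<noteq> 0" "\<And>y. y \<in> span B \<Longrightarrow> orthogonal x y"
    using orthogonal_to_subspace_exists by blast
  then have "x \<in> W" "x \<noteq> 0"
    by (auto simp: W_def orthogonal_def inner_commute span_base)
  moreover have "N *v y \<in> W" if y: "y \<in> W" for y
    unfolding W_def mem_Collect_eq
  proof
    fix b assume "b \<in> B"
    then obtain \<mu> where "N *v b = \<mu> *\<^sub>R b"
      using eig by blast
    then have "b \<bullet> (N *v y) = \<mu> * (b \<bullet> y)"
      by (simp add: inner_symmetric_matrix[OF sym])
    with y \<open>b \<in> B\<close> show "b \<bullet> (N *v y) = 0"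
      by (simp add: W_def)
  qed
  ultimately obtain v where v: "v \<in> W" "norm v = 1" "N *v v = (v \<bullet> (N *v v)) *\<^sub>R v"
    using symmetric_matrix_invariant_subspace_eigenvector[OF sym W] by blast
  have "v \<notin> B"
    using v(1,2) by (auto simp: W_def inner_eq_zero_iff)
  moreover have "pairwise orthogonal (insert v B)"
    using B(4) v(1) by (auto simp: W_def pairwise_insert orthogonal_def inner_commute)
  ultimately show ?case
    using B eig v by (intro Suc.prems(1)[of "insert v B"]) auto
qed

lemma orthonormal_basis_sum_inner:
  fixes h :: "real^'n \<Rightarrow> 'a::real_vector"
  assumes B: "orthonormal_basis B" and b: "b \<in> B"
  shows "(\<Sum>c\<in>B. (c \<bullet> b) *\<^sub>R h c) = h b"
proof -
  have "(\<Sum>c\<in>B - {b}. (c \<bullet> b) *\<^sub>R h c) = 0"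
    using B b by (intro sum.neutral) (auto simp: orthonormal_basis_def pairwise_def orthogonal_def)
  moreover have "finite B" "b \<bullet> b = 1"
    using B b by (auto simp: orthonormal_basis_def power2_norm_eq_inner[symmetric])
  ultimately show ?thesis
    using sum.remove[OF _ b, of "\<lambda>c. (c \<bullet> b) *\<^sub>R h c"] by simp
qed

lemma orthonormal_basis_expansion:
  assumes B: "orthonormal_basis B"
  shows "x = (\<Sum>b\<in>B. (b \<bullet> x) *\<^sub>R b)"
proof -
  have "finite B" "pairwise orthogonal B" "0 \<notin> B"
    using B by (auto simp: orthonormal_basis_def)
  then have "independent B"
    by (intro pairwise_orthogonal_independent)
  with B have "span B = UNIV"
    by (simp add: orthonormal_basis_def dim_eq_full[symmetric] dim_eq_card_independent)
  then obtain u where u: "x = (\<Sum>c\<in>B. u c *\<^sub>R c)"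
    using span_finite[OF \<open>finite B\<close>] by auto
  have "b \<bullet> x = u b" if "b \<in> B" for b
  proof -
    have "b \<bullet> x = (\<Sum>c\<in>B. (c \<bullet> b) *\<^sub>R u c)"
      unfolding u by (simp add: inner_sum_right inner_commute mult.commute)
    also have "\<dots> = u b"
      by (rule orthonormal_basis_sum_inner[OF B \<open>b \<in> B\<close>])
    finally show ?thesis .
  qed
  with u show ?thesis
    by (metis (no_types, lifting) sum.cong)
qed

text \<open>For an orthonormal basis \<open>B\<close> this is the matrix with eigenvectors \<open>b \<in> B\<close> and
  eigenvalues \<open>f b\<close>.\<close>
definition diag_onb :: "(real^'n) set \<Rightarrow> (real^'n \<Rightarrow> real) \<Rightarrow> real^'n^'n" where
  "diag_onb B f = (\<chi> i j. \<Sum>b\<in>B. f b * (b $ i * b $ j))"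

lemma diag_onb_mult_vec: "diag_onb B f *v x = (\<Sum>b\<in>B. (f b * (b \<bullet> x)) *\<^sub>R b)"
  unfolding vec_eq_iff
  by (simp add: matrix_vector_mult_def inner_vec_def diag_onb_def sum_distrib_left
      sum_distrib_right sum_component) (intro allI, subst sum.swap, simp add: mult_ac)

lemma diag_onb_eigenvector:
  assumes "orthonormal_basis B" and "b \<in> B"
  shows "diag_onb B f *v b = f b *\<^sub>R b"
  using orthonormal_basis_sum_inner[OF assms, of "\<lambda>c. f c *\<^sub>R c"]
  by (simp add: diag_onb_mult_vec mult.commute)

lemma diag_onb_mult:
  assumes B: "orthonormal_basis B"
  shows "diag_onb B f ** diag_onb B g = diag_onb B (\<lambda>b. f b * g b)"
  unfolding matrix_eq
proof
  fix x
  have "(diag_onb B f ** diag_onb B g) *v x = (\<Sum>c\<in>B. (g c * (c \<bullet> x)) *\<^sub>R (diag_onb B f *v c))"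
    by (simp add: matrix_vector_mul_assoc[symmetric] diag_onb_mult_vec[of B g]
        matrix_vector_mult_scaleR linear_sum[OF matrix_vector_mul_linear])
  also have "\<dots> = (\<Sum>c\<in>B. (f c * g c * (c \<bullet> x)) *\<^sub>R c)"
    by (intro sum.cong refl) (simp add: diag_onb_eigenvector[OF B])
  also have "\<dots> = diag_onb B (\<lambda>b. f b * g b) *v x"
    by (simp add: diag_onb_mult_vec)
  finally show "(diag_onb B f ** diag_onb B g) *v x = diag_onb B (\<lambda>b. f b * g b) *v x" .
qed

lemma transpose_diag_onb: "transpose (diag_onb B f) = diag_onb B f"
  by (simp add: transpose_def diag_onb_def vec_eq_iff mult.commute)

lemma diag_onb_cong: "(\<And>b. b \<in> B \<Longrightarrow> f b = g b) \<Longrightarrow> diag_onb B f = diag_onb B g"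
  by (simp add: diag_onb_def vec_eq_iff)

lemma diag_onb_0: "diag_onb B (\<lambda>b. 0) = 0"
  by (simp add: diag_onb_def vec_eq_iff)

lemma quadratic_form_diag_onb: "x \<bullet> (diag_onb B f *v x) = (\<Sum>b\<in>B. f b * (b \<bullet> x)\<^sup>2)"
  by (simp add: diag_onb_mult_vec inner_sum_right power2_eq_square inner_commute mult_ac)

theorem spectral_theorem:
  fixes N :: "real^'n^'n"
  assumes "transpose N = N"
  obtains B where "orthonormal_basis B" "N = diag_onb B (\<lambda>b. b \<bullet> (N *v b))"
proof -
  obtain B where "finite B" "card B = CARD('n)" "\<forall>b\<in>B. norm b = 1" "pairwise orthogonal B"
    and eig: "\<forall>b\<in>B. N *v b = (b \<bullet> (N *v b)) *\<^sub>R b"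
    using symmetric_matrix_orthonormal_eigenvectors[OF assms order.refl] by metis
  then have B: "orthonormal_basis B"
    by (simp add: orthonormal_basis_def)
  have "N = diag_onb B (\<lambda>b. b \<bullet> (N *v b))"
    unfolding matrix_eq
  proof
    fix x
    have "N *v x = (\<Sum>b\<in>B. (b \<bullet> x) *\<^sub>R (N *v b))"
      by (subst orthonormal_basis_expansion[OF B, of x])
         (simp add: matrix_vector_mult_scaleR linear_sum[OF matrix_vector_mul_linear])
    also have "\<dots> = diag_onb B (\<lambda>b. b \<bullet> (N *v b)) *v x"
      unfolding diag_onb_mult_vec
    proof (rule sum.cong[OF refl])
      fix b assume "b \<in> B"
      with eig have "(b \<bullet> x) *\<^sub>R (N *v b) = (b \<bullet> x) *\<^sub>R ((b \<bullet> (N *v b)) *\<^sub>R b)"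
        by (metis (no_types))
      then show "(b \<bullet> x) *\<^sub>R (N *v b) = ((b \<bullet> (N *v b)) * (b \<bullet> x)) *\<^sub>R b"
        by (simp add: mult.commute)
    qed
    finally show "N *v x = diag_onb B (\<lambda>b. b \<bullet> (N *v b)) *v x" .
  qed
  with B show ?thesis
    by (rule that)
qed

subsection \<open>Square roots and pseudo-inverses\<close>

lemma symmetric_psd_quadratic_eq_0:
  assumes "symmetric_psd P" "v \<bullet> (P *v v) = 0"
  shows "P *v v = 0"
  using assms psd_on_subspace_quadratic_eq_0[of UNIV P v] by (auto simp: symmetric_psd_def)

lemma symmetric_psd_sqrt_exists:
  assumes M: "symmetric_psd M"
  obtains S where "symmetric_psd S" "S ** S = M"
proof -
  obtain B where B: "orthonormal_basis B" and M_eq: "M = diag_onb B (\<lambda>b. b \<bullet> (M *v b))"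
    using spectral_theorem M by (auto simp: symmetric_psd_def)
  have nonneg: "0 \<le> b \<bullet> (M *v b)" for b
    using M by (simp add: symmetric_psd_def)
  let ?S = "diag_onb B (\<lambda>b. sqrt (b \<bullet> (M *v b)))"
  have "?S ** ?S = M"
    using nonneg by (subst M_eq) (simp add: diag_onb_mult[OF B] real_sqrt_mult[symmetric])
  moreover have "symmetric_psd ?S"
    by (auto simp: symmetric_psd_def transpose_diag_onb quadratic_form_diag_onb nonneg
        intro!: sum_nonneg)
  ultimately show ?thesis
    using that by blast
qed

text \<open>On an eigenvector \<open>b\<close> of \<open>S - T\<close> with eigenvalue \<open>\<mu>\<close>, the identity
  \<open>0 = S\<^sup>2 - T\<^sup>2 = S (S - T) + (S - T) T\<close> gives \<open>\<mu> (b\<bullet>Sb + b\<bullet>Tb) = 0\<close>.\<close>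
lemma psd_square_roots_diff_eigenvalue_eq_0:
  assumes S: "symmetric_psd S" and T: "symmetric_psd T" and "S ** S = T ** T"
    and eigen: "(S - T) *v b = \<mu> *\<^sub>R b" and "b \<noteq> 0"
  shows "\<mu> = 0"
proof (rule ccontr)
  assume "\<mu> \<noteq> 0"
  let ?N = "S - T"
  have sym: "transpose ?N = ?N"
    using S T by (simp add: symmetric_psd_def transpose_diff)
  have SN: "b \<bullet> ((S ** ?N) *v b) = \<mu> * (b \<bullet> (S *v b))"
    by (simp only: matrix_vector_mul_assoc[symmetric] eigen matrix_vector_mult_scaleR
        inner_scaleR_right)
  have NT: "b \<bullet> ((?N ** T) *v b) = \<mu> * (b \<bullet> (T *v b))"
    by (simp only: matrix_vector_mul_assoc[symmetric] inner_symmetric_matrix[OF sym] eigen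
        inner_scaleR_left)
  have "S ** ?N + ?N ** T = S ** S - T ** T"
    by (simp add: matrix_diff_ldistrib matrix_diff_rdistrib)
  then have "0 = b \<bullet> ((S ** ?N + ?N ** T) *v b)"
    using \<open>S ** S = T ** T\<close> by simp
  also have "\<dots> = \<mu> * (b \<bullet> (S *v b) + b \<bullet> (T *v b))"
    by (simp only: matrix_vector_mult_add_rdistrib inner_add_right SN NT distrib_left)
  finally have "b \<bullet> (S *v b) + b \<bullet> (T *v b) = 0"
    using \<open>\<mu> \<noteq> 0\<close> by simp
  moreover have "0 \<le> b \<bullet> (S *v b)" "0 \<le> b \<bullet> (T *v b)"
    using S T by (simp_all add: symmetric_psd_def)
  ultimately have "S *v b = 0" "T *v b = 0"
    using S T symmetric_psd_quadratic_eq_0 by (metis add_nonneg_eq_0_iff)+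
  then have "\<mu> *\<^sub>R b = 0"
    by (simp add: eigen[symmetric] matrix_vector_mult_diff_rdistrib)
  with \<open>\<mu> \<noteq> 0\<close> \<open>b \<noteq> 0\<close> show False
    by simp
qed

lemma symmetric_psd_sqrt_unique:
  assumes S: "symmetric_psd S" and T: "symmetric_psd T" and "S ** S = T ** T"
  shows "S = T"
proof -
  let ?N = "S - T"
  have "transpose ?N = ?N"
    using S T by (simp add: symmetric_psd_def transpose_diff)
  then obtain B where B: "orthonormal_basis B" and N_eq: "?N = diag_onb B (\<lambda>b. b \<bullet> (?N *v b))"
    by (rule spectral_theorem)
  have "b \<bullet> (?N *v b) = 0" if "b \<in> B" for b
  proof (rule psd_square_roots_diff_eigenvalue_eq_0[OF assms])
    show "?N *v b = (b \<bullet> (?N *v b)) *\<^sub>R b"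
      by (subst (1) N_eq) (rule diag_onb_eigenvector[OF B \<open>b \<in> B\<close>])
    show "b \<noteq> 0"
      using B \<open>b \<in> B\<close> by (auto simp: orthonormal_basis_def)
  qed
  then have "?N = 0"
    by (subst N_eq) (simp add: diag_onb_cong[of B _ "\<lambda>b. 0"] diag_onb_0)
  then show ?thesis by simp
qed

lemma mat_sqrt_correct:
  assumes "symmetric_psd M"
  shows "symmetric_psd (mat_sqrt M)" "mat_sqrt M ** mat_sqrt M = M"
proof -
  obtain S where "symmetric_psd S" "S ** S = M"
    using symmetric_psd_sqrt_exists[OF assms] .
  have "symmetric_psd (mat_sqrt M) \<and> mat_sqrt M ** mat_sqrt M = M"
    unfolding mat_sqrt_def
    by (rule theI[of _ S]) (use \<open>symmetric_psd S\<close> \<open>S ** S = M\<close> symmetric_psd_sqrt_unique in auto)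
  then show "symmetric_psd (mat_sqrt M)" "mat_sqrt M ** mat_sqrt M = M"
    by auto
qed

lemma symmetric_psd_transpose_mult: "symmetric_psd (transpose A ** (A::real^'n^'m))"
  unfolding symmetric_psd_def
proof (intro conjI allI)
  show "transpose (transpose A ** A) = transpose A ** A"
    by (simp add: matrix_transpose_mul)
  fix x :: "real^'n"
  have "x \<bullet> ((transpose A ** A) *v x) = (A *v x) \<bullet> (A *v x)"
    by (simp add: matrix_vector_mul_assoc[symmetric] dot_lmul_matrix[symmetric] inner_commute)
  then show "0 \<le> x \<bullet> ((transpose A ** A) *v x)"
    by simp
qed

definition penrose_conditions :: "real^'n^'m \<Rightarrow> real^'m^'n \<Rightarrow> bool" where
  "penrose_conditions B X \<longleftrightarrow> B ** X ** B = B \<and> X ** B ** X = X \<and>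
     transpose (B ** X) = B ** X \<and> transpose (X ** B) = X ** B"

lemma penrose_conditions_unique:
  assumes "penrose_conditions B X" "penrose_conditions B Y"
  shows "X = Y"
proof -
  have X: "B ** X ** B = B" "X ** B ** X = X" "transpose (B ** X) = B ** X" "transpose (X ** B) = X ** B"
    and Y: "B ** Y ** B = B" "Y ** B ** Y = Y" "transpose (B ** Y) = B ** Y" "transpose (Y ** B) = Y ** B"
    using assms by (simp_all add: penrose_conditions_def)
  have "X = X ** transpose (B ** X)"
    using X(2,3) by (simp add: matrix_mul_assoc)
  also have "\<dots> = X ** transpose (B ** Y ** B ** X)"
    using Y(1) by simp
  also have "\<dots> = X ** B ** Y"
    using X(1,3) Y(3) by (metis matrix_transpose_mul matrix_mul_assoc)
  finally have XBY: "X = X ** B ** Y" .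
  have "Y = transpose (Y ** B) ** Y"
    using Y(2,4) by simp
  also have "\<dots> = transpose (Y ** (B ** X ** B)) ** Y"
    using X(1) by simp
  also have "\<dots> = X ** B ** Y"
    using X(4) Y(2,4) by (metis matrix_transpose_mul matrix_mul_assoc)
  finally show ?thesis
    using XBY by simp
qed

lemma pinv_penrose_conditions:
  assumes "penrose_conditions B X"
  shows "penrose_conditions B (pinv B)"
proof -
  have "pinv B = (THE X. penrose_conditions B X)"
    by (simp add: pinv_def penrose_conditions_def)
  with assms penrose_conditions_unique show ?thesis
    by (metis theI)
qed

lemma pinv_symmetric:
  assumes "transpose S = S"
  shows "penrose_conditions S (pinv S)"
proof -
  define ev where "ev b = b \<bullet> (S *v b)" for b
  obtain B where B: "orthonormal_basis B" and S_eq: "S = diag_onb B ev"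
    using spectral_theorem[OF assms] unfolding ev_def by blast
  have inverse_cancel: "x * inverse x * x = x" "inverse x * x * inverse x = inverse x" for x :: real
    by (cases "x = 0"; simp)+
  have "penrose_conditions (diag_onb B ev) (diag_onb B (\<lambda>b. inverse (ev b)))"
    unfolding penrose_conditions_def diag_onb_mult[OF B] transpose_diag_onb inverse_cancel
    by simp
  then show ?thesis
    unfolding S_eq by (rule pinv_penrose_conditions)
qed

lemma transpose_mult_self_eq_0_iff: "transpose D ** D = 0 \<longleftrightarrow> D = (0::real^'n^'m)"
proof
  assume "transpose D ** D = 0"
  then have "column j D \<bullet> column j D = 0" for j
    by (simp add: matrix_mult_transpose_dot_column vec_eq_iff)
  then show "D = 0"
    by (simp add: vec_eq_iff column_def)
qed simp

text \<open>With \<open>Q = P - 1\<close> we have \<open>(A Q)\<^sup>T (A Q) = (S Q)\<^sup>T (S Q) = 0\<close>.\<close>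
lemma gram_sqrt_absorb:
  fixes A :: "real^'n^'m"
  assumes "transpose S = S" "S ** S = transpose A ** A" and "S ** P = S"
  shows "A ** P = A"
proof -
  let ?Q = "P - mat 1"
  have "transpose (A ** ?Q) ** (A ** ?Q) = transpose ?Q ** (S ** S) ** ?Q"
    unfolding assms(2) by (simp add: matrix_transpose_mul matrix_mul_assoc)
  also have "\<dots> = transpose (S ** ?Q) ** (S ** ?Q)"
    using assms(1) by (simp add: matrix_transpose_mul matrix_mul_assoc)
  also have "S ** ?Q = 0"
    using assms(3) by (simp add: matrix_diff_ldistrib)
  finally have "A ** ?Q = 0"
    by (simp add: transpose_mult_self_eq_0_iff)
  then show ?thesis
    by (simp add: matrix_diff_ldistrib)
qed

lemma pinv_gram_sqrt_cancel:
  fixes A :: "real^'n^'m"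
  assumes sym: "transpose S = S" and sqrt: "S ** S = transpose A ** A"
  shows "A ** pinv S ** S = A" "S ** pinv S ** transpose A = transpose A"
proof -
  have SXS: "S ** pinv S ** S = S" and SX: "transpose (S ** pinv S) = S ** pinv S"
    using pinv_symmetric[OF sym] by (simp_all add: penrose_conditions_def)
  have "S ** (pinv S ** S) = S"
    using SXS by (simp add: matrix_mul_assoc)
  then have "A ** (pinv S ** S) = A"
    by (rule gram_sqrt_absorb[OF sym sqrt])
  then show "A ** pinv S ** S = A"
    by (simp add: matrix_mul_assoc)
  have "S ** (S ** pinv S) = transpose (S ** pinv S ** S)"
    unfolding matrix_transpose_mul[of "S ** pinv S" S] SX sym ..
  then have "S ** (S ** pinv S) = S"
    using SXS sym by simp
  then have "A ** (S ** pinv S) = A"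
    by (rule gram_sqrt_absorb[OF sym sqrt])
  then show "S ** pinv S ** transpose A = transpose A"
    by (metis SX matrix_transpose_mul transpose_transpose)
qed

theorem proposition1:
  fixes A :: "real^'n^'n"
  shows "mat_exp (block2 0 A (transpose A) 0) =
    block2 (mat_cosh (mat_sqrt (A ** transpose A)))
           (A ** pinv (mat_sqrt (transpose A ** A)) ** mat_sinh (mat_sqrt (transpose A ** A)))
           (mat_sinh (mat_sqrt (transpose A ** A)) ** pinv (mat_sqrt (transpose A ** A)) ** transpose A)
           (mat_cosh (mat_sqrt (transpose A ** A)))"
proof -
  define S where "S = mat_sqrt (transpose A ** A)"
  define T where "T = mat_sqrt (A ** transpose A)"
  let ?sinhc = "mat_series (\<lambda>k. 1 / fact (2 * k + 1)) (transpose A ** A)"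
  have "symmetric_psd S" and SS: "S ** S = transpose A ** A"
    unfolding S_def by (intro mat_sqrt_correct symmetric_psd_transpose_mult)+
  then have sym: "transpose S = S"
    by (simp add: symmetric_psd_def)
  have TT: "T ** T = A ** transpose A"
    using mat_sqrt_correct(2)[OF symmetric_psd_transpose_mult[of "transpose A"]] by (simp add: T_def)
  have "A ** pinv S ** mat_sinh S = A ** ?sinhc"
    unfolding mat_sinh_eq_mat_series(1) SS
    by (metis pinv_gram_sqrt_cancel(1)[OF sym SS] matrix_mul_assoc)
  moreover have "mat_sinh S ** pinv S ** transpose A = ?sinhc ** transpose A"
    unfolding mat_sinh_eq_mat_series(2) SS
    by (metis pinv_gram_sqrt_cancel(2)[OF sym SS] matrix_mul_assoc)
  ultimately show ?thesis
    unfolding mat_exp_antidiag_block2 mat_cosh_eq_mat_series SS TT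
      S_def[symmetric] T_def[symmetric] by simp
qed

end
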